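(* Under the curve flow $\gamma_t=k_1\gamma''+k_2\gamma'-\big(k_2'+\tfrac13(k_1''+2k_1^2)\big)\gamma$, one has \[ (k_2)_t=D\Big(\tfrac23k_1^{(4)}+k_2'''-2k_1k_1''-(k_1')^2-2k_1k_2'+\tfrac49k_1^3+2k_2^2\Big), \] so $\int k_2\,\mathrm{d}x$ is conserved.
   Context: $\gamma(x,t)$ is a family of nondegenerate curves in centroaffine $\mathbb R^3$ parametrized by centroaffine arclength $x$ ($\det(\gamma,\gamma',\gamma'')=1$), with invariants $k_1,k_2$ defined by $\gamma'''=(k_1\gamma)'+k_2\gamma$; $D=\partial/\partial x$. *)

theory Defs
  imports "HOL-Analysis.Analysis"
begin

text \<open>Partial derivatives of a two-parameter family f x t
  (x = centroaffine arclength, t = time).\<close>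

definition Dx :: "(real \<Rightarrow> real \<Rightarrow> 'a::real_normed_vector) \<Rightarrow> real \<Rightarrow> real \<Rightarrow> 'a" where
  "Dx f x t = vector_derivative (\<lambda>s. f s t) (at x)"

definition Dt :: "(real \<Rightarrow> real \<Rightarrow> 'a::real_normed_vector) \<Rightarrow> real \<Rightarrow> real \<Rightarrow> 'a" where
  "Dt f x t = vector_derivative (\<lambda>s. f x s) (at t)"

fun pderivs :: "bool list \<Rightarrow> (real \<Rightarrow> real \<Rightarrow> 'a::real_normed_vector) \<Rightarrow> real \<Rightarrow> real \<Rightarrow> 'a" where
  "pderivs [] f = f"
| "pderivs (True # ws) f = Dx (pderivs ws f)"
| "pderivs (False # ws) f = Dt (pderivs ws f)"

definition smooth2 :: "real set \<Rightarrow> (real \<Rightarrow> real \<Rightarrow> 'a::real_normed_vector) \<Rightarrow> bool" where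
  "smooth2 T f \<longleftrightarrow> (\<forall>ws x t. t \<in> T \<longrightarrow>
       (\<lambda>p. pderivs ws f (fst p) (snd p)) differentiable (at (x, t)))"

end

theory Submission
  imports Defs
begin

text \<open>The frame (\<gamma>, \<gamma>', \<gamma>'') is unimodular, so vectors are determined by their
  coefficients in it, and the structure equation \<gamma>''' = (k1' + k2) \<gamma> + k1 \<gamma>' expands every
  x-derivative of \<gamma>_t in the frame again. Since \<partial>/\<partial>t commutes with D, the vector \<partial>/\<partial>t \<gamma>''' can
  be computed both as D^3 \<gamma>_t and by differentiating the structure equation in t. Comparing
  \<gamma>'-coefficients yields (k1)_t; comparing \<gamma>-coefficients then yields (k2)_t, which is the
  x-derivative of an explicit flux. For a closed curve of period L the flux is L-periodic, so the
  integral of k2 over a period does not depend on t.\<close>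

lemma pderivs_append: "pderivs ws (pderivs vs f) = pderivs (ws @ vs) f"
proof (induction ws)
  case (Cons w ws) then show ?case by (cases w) auto
qed simp

lemma smooth2_pderivs: "smooth2 T f \<Longrightarrow> smooth2 T (pderivs vs f)"
  unfolding smooth2_def pderivs_append by blast

lemma smooth2_Dx: "smooth2 T f \<Longrightarrow> smooth2 T (Dx f)"
  using smooth2_pderivs[of T f "[True]"] by simp

lemma smooth2_Dt: "smooth2 T f \<Longrightarrow> smooth2 T (Dt f)"
  using smooth2_pderivs[of T f "[False]"] by simp

lemma smooth2_Dx_iterate: "smooth2 T f \<Longrightarrow> smooth2 T ((Dx ^^ n) f)"
  by (induction n) (simp_all add: smooth2_Dx)

lemma smooth2_differentiable:
  "smooth2 T f \<Longrightarrow> t \<in> T \<Longrightarrow> (\<lambda>p. f (fst p) (snd p)) differentiable (at (x, t))"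
  unfolding smooth2_def using pderivs.simps(1) by metis

lemma smooth2_has_Dx:
  assumes "smooth2 T f" "t \<in> T"
  shows "((\<lambda>s. f s t) has_vector_derivative Dx f x t) (at x)"
proof -
  have "((\<lambda>p. f (fst p) (snd p)) \<circ> (\<lambda>s. (s, t))) differentiable (at x)"
    by (intro differentiable_chain_at smooth2_differentiable[OF assms] derivative_intros)
  then show ?thesis
    unfolding Dx_def by (simp add: o_def vector_derivative_works[symmetric])
qed

lemma smooth2_has_Dt:
  assumes "smooth2 T f" "t \<in> T"
  shows "((\<lambda>s. f x s) has_vector_derivative Dt f x t) (at t)"
proof -
  have "((\<lambda>p. f (fst p) (snd p)) \<circ> (\<lambda>s. (x, s))) differentiable (at t)"
    by (intro differentiable_chain_at smooth2_differentiable[OF assms] derivative_intros)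
  then show ?thesis
    unfolding Dt_def by (simp add: o_def vector_derivative_works[symmetric])
qed

lemma smooth2_continuous_on_x:
  "smooth2 T f \<Longrightarrow> t \<in> T \<Longrightarrow> continuous_on S (\<lambda>s. f s t)"
  by (rule continuous_at_imp_continuous_on)
    (use has_vector_derivative_continuous smooth2_has_Dx in blast)

lemma smooth2_continuous_on_swapped:
  assumes "smooth2 T f" "A \<subseteq> T"
  shows "continuous_on (A \<times> B) (\<lambda>(t, s). f s t)"
proof (intro continuous_at_imp_continuous_on ballI)
  fix q assume "q \<in> A \<times> B"
  then have "isCont (\<lambda>p. f (fst p) (snd p)) (snd q, fst q)"
    using assms differentiable_imp_continuous_within smooth2_differentiable by fastforce
  then have "isCont ((\<lambda>p. f (fst p) (snd p)) \<circ> (\<lambda>q. (snd q, fst q))) q"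
    by (intro continuous_at_compose continuous_intros)
  then show "isCont (\<lambda>(t, s). f s t) q" by (simp add: o_def case_prod_beta')
qed

lemma has_vector_derivative_integral_Dt:
  fixes f :: "real \<Rightarrow> real \<Rightarrow> 'a::banach"
  assumes "convex T" "smooth2 T f" "t \<in> T"
  shows "((\<lambda>t. integral {a..b} (\<lambda>s. f s t)) has_vector_derivative integral {a..b} (\<lambda>s. Dt f s t))
           (at t within T)"
  unfolding box_real(2)[symmetric]
proof (rule leibniz_rule_vector_derivative[where f="\<lambda>t s. f s t" and fx="\<lambda>t s. Dt f s t"])
  show "((\<lambda>t. f s t) has_vector_derivative Dt f s t) (at t within T)" if "t \<in> T" for s t
    using smooth2_has_Dt[OF assms(2) that] by (rule has_vector_derivative_at_within)
  show "(\<lambda>s. f s t) integrable_on cbox a b" if "t \<in> T" for t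
    unfolding box_real(2) by (intro integrable_continuous_interval smooth2_continuous_on_x[OF assms(2) that])
  show "continuous_on (T \<times> cbox a b) (\<lambda>(t, s). Dt f s t)"
    by (rule smooth2_continuous_on_swapped[OF smooth2_Dt[OF assms(2)]]) simp
qed (use assms in auto)

lemma Dx_eqI:
  assumes "\<And>s. f s t = g s" "(g has_vector_derivative g') (at x)"
  shows "Dx f x t = g'"
  unfolding Dx_def using assms by (simp add: vector_derivative_at)

lemma Dx_scaleR:
  assumes "smooth2 T f" "smooth2 T g" "t \<in> T"
  shows "Dx (\<lambda>x t. f x t *\<^sub>R g x t) x t = f x t *\<^sub>R Dx g x t + Dx f x t *\<^sub>R g x t"
  using smooth2_has_Dx[OF assms(1,3)] smooth2_has_Dx[OF assms(2,3)]
  by (intro Dx_eqI[OF refl] has_vector_derivative_scaleR)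
    (simp_all add: has_real_derivative_iff_has_vector_derivative)

lemma Dx_eqI_real:
  "(\<And>s. f s t = g s) \<Longrightarrow> (g has_real_derivative g') (at x) \<Longrightarrow> Dx f x t = g'"
  by (rule Dx_eqI) (simp_all add: has_real_derivative_iff_has_vector_derivative)

lemma Dx_cong: "(\<And>s. f s t = g s t) \<Longrightarrow> Dx f x t = Dx g x t"
  by (simp add: Dx_def)

lemma Dt_eqI:
  assumes "open T" "t \<in> T" "\<And>s. s \<in> T \<Longrightarrow> f x s = g s" "(g has_vector_derivative g') (at t)"
  shows "Dt f x t = g'"
proof -
  have "((\<lambda>s. f x s) has_vector_derivative g') (at t)"
    by (rule has_vector_derivative_transform_within_open[OF assms(4,1,2)]) (simp add: assms(3))
  then show ?thesis unfolding Dt_def by (rule vector_derivative_at)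
qed

lemma Dt_eq_Dt_add_integral_Dt_Dx:
  fixes f :: "real \<Rightarrow> real \<Rightarrow> 'a::banach"
  assumes T: "open T" "convex T" and f: "smooth2 T f" and t: "t \<in> T" and "c \<le> s"
  shows "Dt f s t = Dt f c t + integral {c..s} (\<lambda>u. Dt (Dx f) u t)"
proof (rule Dt_eqI[OF T(1) t])
  show "f s t' = f c t' + integral {c..s} (\<lambda>u. Dx f u t')" if "t' \<in> T" for t'
  proof -
    have "((\<lambda>u. Dx f u t') has_integral (f s t' - f c t')) {c..s}"
      using that \<open>c \<le> s\<close> by (intro fundamental_theorem_of_calculus)
        (auto intro: has_vector_derivative_at_within smooth2_has_Dx[OF f])
    then show ?thesis by (simp add: integral_unique)
  qed
  have "((\<lambda>t'. integral {c..s} (\<lambda>u. Dx f u t')) has_vector_derivative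
          integral {c..s} (\<lambda>u. Dt (Dx f) u t)) (at t)"
    using has_vector_derivative_integral_Dt[OF T(2) smooth2_Dx[OF f] t]
    by (simp add: at_within_open[OF t T(1)])
  then show "((\<lambda>t'. f c t' + integral {c..s} (\<lambda>u. Dx f u t')) has_vector_derivative
               Dt f c t + integral {c..s} (\<lambda>u. Dt (Dx f) u t)) (at t)"
    by (rule has_vector_derivative_add[OF smooth2_has_Dt[OF f t]])
qed

(* Schwarz's theorem: the integral representation above is differentiable in s. *)
lemma Dt_Dx_commute:
  fixes f :: "real \<Rightarrow> real \<Rightarrow> 'a::banach"
  assumes T: "open T" "convex T" and f: "smooth2 T f" and t: "t \<in> T"
  shows "Dt (Dx f) x t = Dx (Dt f) x t"
proof -
  define c where "c = x - 1"
  have "at x within {c..x + 1} = at x"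
    by (rule at_within_Icc_at) (simp_all add: c_def)
  moreover have "((\<lambda>s. integral {c..s} (\<lambda>u. Dt (Dx f) u t)) has_vector_derivative Dt (Dx f) x t)
      (at x within {c..x + 1})"
    by (rule integral_has_vector_derivative[OF smooth2_continuous_on_x[OF smooth2_Dt[OF smooth2_Dx[OF f]] t]])
      (simp add: c_def)
  ultimately have "((\<lambda>s. Dt f c t + integral {c..s} (\<lambda>u. Dt (Dx f) u t)) has_vector_derivative
                     Dt (Dx f) x t) (at x)"
    using has_vector_derivative_add[OF has_vector_derivative_const] by fastforce
  then have "((\<lambda>s. Dt f s t) has_vector_derivative Dt (Dx f) x t) (at x)"
  proof (rule has_vector_derivative_transform_within_open)
    show "open {c<..}" "x \<in> {c<..}" by (simp_all add: c_def)
    show "Dt f c t + integral {c..s} (\<lambda>u. Dt (Dx f) u t) = Dt f s t" if "s \<in> {c<..}" for s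
      using that by (intro Dt_eq_Dt_add_integral_Dt_Dx[OF T f t, symmetric]) simp
  qed
  then have "Dx (Dt f) x t = Dt (Dx f) x t" by (rule Dx_eqI[rotated]) simp
  then show ?thesis ..
qed

lemma Dt_Dx_iterate_commute:
  fixes f :: "real \<Rightarrow> real \<Rightarrow> 'a::banach"
  assumes "open T" "convex T" "smooth2 T f" "t \<in> T"
  shows "Dt ((Dx ^^ n) f) x t = (Dx ^^ n) (Dt f) x t"
  using assms(4)
proof (induction n arbitrary: x t)
  case (Suc n)
  have "Dt (Dx ((Dx ^^ n) f)) x t = Dx (Dt ((Dx ^^ n) f)) x t"
    by (rule Dt_Dx_commute[OF assms(1,2) smooth2_Dx_iterate[OF assms(3)] Suc.prems])
  also have "\<dots> = Dx ((Dx ^^ n) (Dt f)) x t"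
    by (rule Dx_cong) (rule Suc.IH[OF Suc.prems])
  finally show ?case by simp
qed simp

lemma Dx_periodic:
  assumes "smooth2 T f" "t \<in> T" "\<And>s. f (s + L) t = f s t"
  shows "Dx f (x + L) t = Dx f x t"
proof -
  have "((\<lambda>s. s + L) has_vector_derivative 1) (at x)"
    unfolding has_real_derivative_iff_has_vector_derivative[symmetric] by (auto intro!: derivative_eq_intros)
  from vector_diff_chain_at[OF this smooth2_has_Dx[OF assms(1,2)]]
  have "((\<lambda>s. f (s + L) t) has_vector_derivative Dx f (x + L) t) (at x)"
    by (simp add: o_def)
  then have "Dx f x t = Dx f (x + L) t"
    by (rule Dx_eqI[rotated]) (simp add: assms(3))
  then show ?thesis ..
qed

lemma Dx_iterate_periodic:
  assumes "smooth2 T f" "t \<in> T" "\<And>s. f (s + L) t = f s t"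
  shows "(Dx ^^ n) f (x + L) t = (Dx ^^ n) f x t"
proof (induction n arbitrary: x)
  case (Suc n)
  then show ?case
    using Dx_periodic[OF smooth2_Dx_iterate[OF assms(1)] assms(2)] by simp
qed (simp add: assms(3))

lemma integral_constant_if_Dt_eq_derivative:
  fixes f G :: "real \<Rightarrow> real \<Rightarrow> 'a::banach"
  assumes T: "convex T" and f: "smooth2 T f"
    and G': "\<And>x t. t \<in> T \<Longrightarrow> ((\<lambda>s. G s t) has_vector_derivative Dt f x t) (at x)"
    and G: "\<And>t. t \<in> T \<Longrightarrow> G b t = G a t" and "a \<le> b"
    and "t1 \<in> T" "t2 \<in> T"
  shows "integral {a..b} (\<lambda>x. f x t1) = integral {a..b} (\<lambda>x. f x t2)"
proof -
  have "((\<lambda>t. integral {a..b} (\<lambda>x. f x t)) has_derivative (\<lambda>h. 0)) (at t within T)"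
    if t: "t \<in> T" for t
  proof -
    have "((\<lambda>x. Dt f x t) has_integral G b t - G a t) {a..b}"
      using \<open>a \<le> b\<close> G'[OF t]
      by (intro fundamental_theorem_of_calculus) (auto intro: has_vector_derivative_at_within)
    then have "integral {a..b} (\<lambda>x. Dt f x t) = 0"
      using G[OF t] by (simp add: integral_unique)
    then show ?thesis
      using has_vector_derivative_integral_Dt[OF T f t, of a b] by (simp add: has_vector_derivative_def)
  qed
  then obtain c where "\<forall>t\<in>T. integral {a..b} (\<lambda>x. f x t) = c"
    using has_derivative_zero_constant[OF T] by blast
  then show ?thesis using assms(6,7) by simp
qed

lemma vector3_vector_matrix_mult:
  fixes u v w :: "'a::comm_ring_1 ^ 3"
  shows "vector [a, b, c] v* (vector [u, v, w] :: 'a ^ 3 ^ 3) = a *s u + b *s v + c *s w"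
  by (vector vector_matrix_mult_def sum_3 vector_3 mult.commute)

lemma coeffs_unique_if_det_nonzero:
  fixes u v w :: "real ^ 3"
  assumes "det (vector [u, v, w] :: real ^ 3 ^ 3) \<noteq> 0"
    and "a *\<^sub>R u + b *\<^sub>R v + c *\<^sub>R w = a' *\<^sub>R u + b' *\<^sub>R v + c' *\<^sub>R w"
  shows "a = a' \<and> b = b' \<and> c = c'"
proof -
  let ?M = "vector [u, v, w] :: real ^ 3 ^ 3"
  have "inj ((*v) (transpose ?M))"
    using assms(1) by (simp add: inj_matrix_vector_mult invertible_det_nz)
  moreover have "transpose ?M *v vector [a, b, c] = transpose ?M *v vector [a', b', c']"
    using assms(2) by (simp add: vector3_vector_matrix_mult scalar_mult_eq_scaleR)
  ultimately have "(vector [a, b, c] :: real ^ 3) = vector [a', b', c']"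
    by (rule injD)
  then show ?thesis by (metis vector_3)
qed

lemma has_vector_derivative_frame_combination:
  fixes e0 e1 e2 :: "real \<Rightarrow> 'a::real_normed_vector"
  assumes "(e0 has_vector_derivative e1 x) (at x)" "(e1 has_vector_derivative e2 x) (at x)"
    and "(e2 has_vector_derivative P *\<^sub>R e0 x + Q *\<^sub>R e1 x) (at x)"
    and "(p has_real_derivative p') (at x)" "(q has_real_derivative q') (at x)"
    and "(r has_real_derivative r') (at x)"
  shows "((\<lambda>s. p s *\<^sub>R e0 s + q s *\<^sub>R e1 s + r s *\<^sub>R e2 s) has_vector_derivative
           (p' + r x * P) *\<^sub>R e0 x + (q' + p x + r x * Q) *\<^sub>R e1 x + (r' + q x) *\<^sub>R e2 x) (at x)"
  by (rule has_vector_derivative_eq_rhs[OF has_vector_derivative_add[OF has_vector_derivative_add[OF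
        has_vector_derivative_scaleR[OF assms(4,1)] has_vector_derivative_scaleR[OF assms(5,2)]]
        has_vector_derivative_scaleR[OF assms(6,3)]]])
    (simp add: algebra_simps)

(* structure_eq is the equation \<gamma>''' = (k1 \<gamma>)' + k2 \<gamma> with the product rule applied. *)
locale centroaffine_flow =
  fixes \<gamma> :: "real \<Rightarrow> real \<Rightarrow> real ^ 3" and k1 k2 :: "real \<Rightarrow> real \<Rightarrow> real" and T :: "real set"
  assumes open_T: "open T" and convex_T: "convex T"
    and smooth: "smooth2 T \<gamma>" "smooth2 T k1" "smooth2 T k2"
    and unimodular: "\<And>x t. t \<in> T \<Longrightarrow> det (vector [\<gamma> x t, Dx \<gamma> x t, Dx (Dx \<gamma>) x t] :: real ^ 3 ^ 3) = 1"
    and structure_eq: "\<And>x t. t \<in> T \<Longrightarrow>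
          Dx (Dx (Dx \<gamma>)) x t = (Dx k1 x t + k2 x t) *\<^sub>R \<gamma> x t + k1 x t *\<^sub>R Dx \<gamma> x t"
    and flow: "\<And>x t. t \<in> T \<Longrightarrow>
          Dt \<gamma> x t = k1 x t *\<^sub>R Dx (Dx \<gamma>) x t + k2 x t *\<^sub>R Dx \<gamma> x t
            - (Dx k2 x t + (1/3) * (Dx (Dx k1) x t + 2 * (k1 x t)^2)) *\<^sub>R \<gamma> x t"
begin

definition flux :: "real \<Rightarrow> real \<Rightarrow> real" where
  "flux x t = (2/3) * Dx (Dx (Dx (Dx k1))) x t + Dx (Dx (Dx k2)) x t
     - 2 * k1 x t * Dx (Dx k1) x t - (Dx k1 x t)^2
     - 2 * k1 x t * Dx k2 x t + (4/9) * (k1 x t)^3 + 2 * (k2 x t)^2"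

lemma Dt_structure_eq:
  assumes t: "t \<in> T"
  shows "Dt (Dx (Dx (Dx \<gamma>))) x t = (Dt (Dx k1) x t + Dt k2 x t) *\<^sub>R \<gamma> x t
           + (Dx k1 x t + k2 x t) *\<^sub>R Dt \<gamma> x t + Dt k1 x t *\<^sub>R Dx \<gamma> x t + k1 x t *\<^sub>R Dt (Dx \<gamma>) x t"
proof (rule Dt_eqI[OF open_T t structure_eq])
  have Dt_real: "((\<lambda>s. f x s) has_real_derivative Dt f x t) (at t)"
    if "smooth2 T f" for f :: "real \<Rightarrow> real \<Rightarrow> real"
    using smooth2_has_Dt[OF that t] by (simp add: has_real_derivative_iff_has_vector_derivative)
  show "((\<lambda>s. (Dx k1 x s + k2 x s) *\<^sub>R \<gamma> x s + k1 x s *\<^sub>R Dx \<gamma> x s) has_vector_derivative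
          (Dt (Dx k1) x t + Dt k2 x t) *\<^sub>R \<gamma> x t + (Dx k1 x t + k2 x t) *\<^sub>R Dt \<gamma> x t
           + Dt k1 x t *\<^sub>R Dx \<gamma> x t + k1 x t *\<^sub>R Dt (Dx \<gamma>) x t) (at t)"
    by (rule has_vector_derivative_eq_rhs[OF has_vector_derivative_add[OF
          has_vector_derivative_scaleR[OF DERIV_add[OF Dt_real Dt_real] smooth2_has_Dt[OF smooth(1) t]]
          has_vector_derivative_scaleR[OF Dt_real smooth2_has_Dt[OF smooth2_Dx[OF smooth(1)] t]]]])
      (simp_all add: smooth smooth2_Dx t algebra_simps)
qed

context
  fixes t assumes t: "t \<in> T"
begin

definition \<alpha> :: "nat \<Rightarrow> real \<Rightarrow> real" where "\<alpha> n s = (Dx ^^ n) k1 s t"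
definition \<beta> :: "nat \<Rightarrow> real \<Rightarrow> real" where "\<beta> n s = (Dx ^^ n) k2 s t"

definition frame :: "real \<Rightarrow> real \<Rightarrow> real \<Rightarrow> real \<Rightarrow> real ^ 3" where
  "frame p q r s = p *\<^sub>R \<gamma> s t + q *\<^sub>R Dx \<gamma> s t + r *\<^sub>R Dx (Dx \<gamma>) s t"

lemma has_real_derivative_\<alpha>: "(\<alpha> n has_real_derivative \<alpha> (Suc n) x) (at x)"
  using smooth2_has_Dx[OF smooth2_Dx_iterate[OF smooth(2)] t, of n x]
  by (simp add: \<alpha>_def[abs_def] has_real_derivative_iff_has_vector_derivative)

lemma has_real_derivative_\<beta>: "(\<beta> n has_real_derivative \<beta> (Suc n) x) (at x)"
  using smooth2_has_Dx[OF smooth2_Dx_iterate[OF smooth(3)] t, of n x]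
  by (simp add: \<beta>_def[abs_def] has_real_derivative_iff_has_vector_derivative)

lemma curvature_jets:
  "k1 s t = \<alpha> 0 s" "Dx k1 s t = \<alpha> 1 s" "Dx (Dx k1) s t = \<alpha> 2 s"
  "Dx (Dx (Dx k1)) s t = \<alpha> 3 s" "Dx (Dx (Dx (Dx k1))) s t = \<alpha> 4 s"
  "k2 s t = \<beta> 0 s" "Dx k2 s t = \<beta> 1 s" "Dx (Dx k2) s t = \<beta> 2 s" "Dx (Dx (Dx k2)) s t = \<beta> 3 s"
  by (simp_all add: \<alpha>_def \<beta>_def eval_nat_numeral)

lemma frame_eq_iff: "frame p q r s = frame p' q' r' s \<longleftrightarrow> p = p' \<and> q = q' \<and> r = r'"
  using coeffs_unique_if_det_nonzero[of "\<gamma> s t" "Dx \<gamma> s t" "Dx (Dx \<gamma>) s t"] unimodular[OF t]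
  unfolding frame_def by auto

lemma frame_combination:
  "a *\<^sub>R \<gamma> s t + c *\<^sub>R frame p q r s + b *\<^sub>R Dx \<gamma> s t + d *\<^sub>R frame p' q' r' s
     = frame (a + c * p + d * p') (b + c * q + d * q') (c * r + d * r') s"
  by (simp add: frame_def algebra_simps)

(* Differentiating in the frame; the \<gamma>''' produced by r \<gamma>'' is eliminated by structure_eq. *)
lemma Dx_frameI:
  assumes "\<And>s. f s t = frame (p s) (q s) (r s) s"
    and "(p has_real_derivative p') (at x)" "(q has_real_derivative q') (at x)"
    and "(r has_real_derivative r') (at x)"
    and "P = p' + r x * (\<alpha> 1 x + \<beta> 0 x)" "Q = q' + p x + r x * \<alpha> 0 x" "R = r' + q x"
  shows "Dx f x t = frame P Q R x"
proof (rule Dx_eqI[where f=f and t=t and g="\<lambda>s. frame (p s) (q s) (r s) s", OF assms(1)])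
  have "((\<lambda>s. Dx (Dx \<gamma>) s t) has_vector_derivative
          (\<alpha> 1 x + \<beta> 0 x) *\<^sub>R \<gamma> x t + \<alpha> 0 x *\<^sub>R Dx \<gamma> x t) (at x)"
    using smooth2_has_Dx[OF smooth2_Dx[OF smooth2_Dx[OF smooth(1)]] t, of x]
    by (simp add: structure_eq[OF t] curvature_jets)
  from has_vector_derivative_frame_combination[OF smooth2_has_Dx[OF smooth(1) t]
      smooth2_has_Dx[OF smooth2_Dx[OF smooth(1)] t] this assms(2-4)]
  show "((\<lambda>s. frame (p s) (q s) (r s) s) has_vector_derivative frame P Q R x) (at x)"
    unfolding frame_def assms(5-7) .
qed

lemma Dt_\<gamma>_in_frame: "Dt \<gamma> s t = frame (- \<alpha> 2 s / 3 - \<beta> 1 s - 2/3 * \<alpha> 0 s ^ 2) (\<beta> 0 s) (\<alpha> 0 s) s"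
  using flow[OF t, of s] by (simp add: frame_def curvature_jets algebra_simps)

lemma Dx_Dt_\<gamma>_in_frame:
  "Dx (Dt \<gamma>) s t = frame (- \<alpha> 3 s / 3 - \<beta> 2 s - \<alpha> 0 s * \<alpha> 1 s / 3 + \<alpha> 0 s * \<beta> 0 s)
     (- \<alpha> 2 s / 3 + \<alpha> 0 s ^ 2 / 3) (\<alpha> 1 s + \<beta> 0 s) s"
  by (rule Dx_frameI, rule Dt_\<gamma>_in_frame)
    (auto intro!: derivative_eq_intros has_real_derivative_\<alpha> has_real_derivative_\<beta>
      simp: eval_nat_numeral power2_eq_square field_simps)

lemma Dx2_Dt_\<gamma>_in_frame:
  "Dx (Dx (Dt \<gamma>)) s t = frame
     (- \<alpha> 4 s / 3 - \<beta> 3 s - \<alpha> 0 s * \<alpha> 2 s / 3 + \<alpha> 0 s * \<beta> 1 s + 2/3 * \<alpha> 1 s ^ 2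
        + 3 * \<alpha> 1 s * \<beta> 0 s + \<beta> 0 s ^ 2)
     (- 2/3 * \<alpha> 3 s - \<beta> 2 s + 4/3 * \<alpha> 0 s * \<alpha> 1 s + 2 * \<alpha> 0 s * \<beta> 0 s)
     (2/3 * \<alpha> 2 s + \<beta> 1 s + \<alpha> 0 s ^ 2 / 3) s"
  by (rule Dx_frameI, rule Dx_Dt_\<gamma>_in_frame)
    (auto intro!: derivative_eq_intros has_real_derivative_\<alpha> has_real_derivative_\<beta>
      simp: eval_nat_numeral power2_eq_square field_simps)

lemma Dx3_Dt_\<gamma>_in_frame:
  "Dx (Dx (Dx (Dt \<gamma>))) s t = frame
     (- \<alpha> 5 s / 3 - \<beta> 4 s - \<alpha> 0 s * \<alpha> 3 s / 3 + \<alpha> 0 s * \<beta> 2 s + 5/3 * \<alpha> 1 s * \<alpha> 2 s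
        + 5 * \<alpha> 1 s * \<beta> 1 s + 11/3 * \<alpha> 2 s * \<beta> 0 s + 3 * \<beta> 0 s * \<beta> 1 s
        + \<alpha> 0 s ^ 2 * \<alpha> 1 s / 3 + \<alpha> 0 s ^ 2 * \<beta> 0 s / 3)
     (- \<alpha> 4 s - 2 * \<beta> 3 s + 5/3 * \<alpha> 0 s * \<alpha> 2 s + 4 * \<alpha> 0 s * \<beta> 1 s + 2 * \<alpha> 1 s ^ 2
        + 5 * \<alpha> 1 s * \<beta> 0 s + \<beta> 0 s ^ 2 + \<alpha> 0 s ^ 3 / 3)
     (2 * \<alpha> 0 s * \<alpha> 1 s + 2 * \<alpha> 0 s * \<beta> 0 s) s"
  by (rule Dx_frameI, rule Dx2_Dt_\<gamma>_in_frame)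
    (auto intro!: derivative_eq_intros has_real_derivative_\<alpha> has_real_derivative_\<beta>
      simp: eval_nat_numeral power2_eq_square power3_eq_cube field_simps)

(* \<gamma>''' differentiated in t is expanded in the frame once via Dt_structure_eq and once as
   D^3 \<gamma>_t: the \<gamma>'' coefficients agree identically, the \<gamma>' and \<gamma> coefficients give the
   two identities. *)
lemma evolution_in_frame:
  "Dt k1 x t = - \<alpha> 4 x - 2 * \<beta> 3 x + 2 * \<alpha> 0 x * \<alpha> 2 x + 4 * \<alpha> 0 x * \<beta> 1 x
     + 2 * \<alpha> 1 x ^ 2 + 4 * \<alpha> 1 x * \<beta> 0 x" (is ?Dt_k1)
  "Dt (Dx k1) x t + Dt k2 x t = - \<alpha> 5 x / 3 - \<beta> 4 x + 2 * \<alpha> 0 x * \<beta> 2 x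
     + 2 * \<alpha> 1 x * \<alpha> 2 x + 6 * \<alpha> 1 x * \<beta> 1 x + 4 * \<alpha> 2 x * \<beta> 0 x + 4 * \<beta> 0 x * \<beta> 1 x
     + 4/3 * \<alpha> 0 x ^ 2 * \<alpha> 1 x" (is ?Dt_Dx_k1_k2)
proof -
  have "frame (Dt (Dx k1) x t + Dt k2 x t
          + (\<alpha> 1 x + \<beta> 0 x) * (- \<alpha> 2 x / 3 - \<beta> 1 x - 2/3 * \<alpha> 0 x ^ 2)
          + \<alpha> 0 x * (- \<alpha> 3 x / 3 - \<beta> 2 x - \<alpha> 0 x * \<alpha> 1 x / 3 + \<alpha> 0 x * \<beta> 0 x))
        (Dt k1 x t + (\<alpha> 1 x + \<beta> 0 x) * \<beta> 0 x + \<alpha> 0 x * (- \<alpha> 2 x / 3 + \<alpha> 0 x ^ 2 / 3))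
        ((\<alpha> 1 x + \<beta> 0 x) * \<alpha> 0 x + \<alpha> 0 x * (\<alpha> 1 x + \<beta> 0 x)) x
      = Dt (Dx (Dx (Dx \<gamma>))) x t"
    unfolding Dt_structure_eq[OF t] Dt_Dx_commute[OF open_T convex_T smooth(1) t]
      Dt_\<gamma>_in_frame Dx_Dt_\<gamma>_in_frame curvature_jets frame_combination
    by (simp add: algebra_simps)
  also have "\<dots> = Dx (Dx (Dx (Dt \<gamma>))) x t"
    using Dt_Dx_iterate_commute[OF open_T convex_T smooth(1) t, of 3 x] by (simp add: eval_nat_numeral)
  finally show ?Dt_k1 ?Dt_Dx_k1_k2
    unfolding Dx3_Dt_\<gamma>_in_frame frame_eq_iff by (simp_all add: field_simps power2_eq_square power3_eq_cube)
qed

lemma Dt_k2: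
  "Dt k2 x t = 2/3 * \<alpha> 5 x + \<beta> 4 x - 2 * \<alpha> 0 x * \<alpha> 3 x - 2 * \<alpha> 0 x * \<beta> 2 x
     - 4 * \<alpha> 1 x * \<alpha> 2 x - 2 * \<alpha> 1 x * \<beta> 1 x + 4 * \<beta> 0 x * \<beta> 1 x + 4/3 * \<alpha> 0 x ^ 2 * \<alpha> 1 x"
proof -
  have "Dt (Dx k1) x t = Dx (Dt k1) x t"
    by (rule Dt_Dx_commute[OF open_T convex_T smooth(2) t])
  also have "\<dots> = - \<alpha> 5 x - 2 * \<beta> 4 x + 2 * \<alpha> 0 x * \<alpha> 3 x + 4 * \<alpha> 0 x * \<beta> 2 x
      + 6 * \<alpha> 1 x * \<alpha> 2 x + 8 * \<alpha> 1 x * \<beta> 1 x + 4 * \<alpha> 2 x * \<beta> 0 x"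
    by (rule Dx_eqI_real, rule evolution_in_frame(1))
      (auto intro!: derivative_eq_intros has_real_derivative_\<alpha> has_real_derivative_\<beta>
        simp: eval_nat_numeral power2_eq_square field_simps)
  finally show ?thesis
    using evolution_in_frame(2)[of x] by (simp add: field_simps)
qed

lemma has_real_derivative_flux: "((\<lambda>s. flux s t) has_real_derivative Dt k2 x t) (at x)"
  unfolding flux_def curvature_jets Dt_k2
  by (auto intro!: derivative_eq_intros has_real_derivative_\<alpha> has_real_derivative_\<beta>
      simp: eval_nat_numeral power2_eq_square power3_eq_cube field_simps)

end

lemma Dt_k2_eq_Dx_flux: "t \<in> T \<Longrightarrow> Dt k2 x t = Dx flux x t"
  by (rule Dx_eqI_real[where g="\<lambda>s. flux s t", symmetric]) (simp_all add: has_real_derivative_flux)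

(* The frame is L-periodic, so the structure equation at s + L and at s forces k1 and k1' + k2
   to be L-periodic. *)
lemma curvatures_periodic:
  assumes periodic: "\<And>x t. t \<in> T \<Longrightarrow> \<gamma> (x + L) t = \<gamma> x t" and t: "t \<in> T"
  shows "k1 (x + L) t = k1 x t" "k2 (x + L) t = k2 x t"
proof -
  have \<gamma>_jets: "(Dx ^^ n) \<gamma> (s + L) t = (Dx ^^ n) \<gamma> s t" for n s
    using Dx_iterate_periodic[where f=\<gamma> and L=L and t=t] smooth(1) t periodic by blast
  have "(Dx k1 (s + L) t + k2 (s + L) t) *\<^sub>R \<gamma> s t + k1 (s + L) t *\<^sub>R Dx \<gamma> s t + 0 *\<^sub>R Dx (Dx \<gamma>) s t
      = (Dx k1 s t + k2 s t) *\<^sub>R \<gamma> s t + k1 s t *\<^sub>R Dx \<gamma> s t + 0 *\<^sub>R Dx (Dx \<gamma>) s t" for s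
    using structure_eq[OF t, of "s + L"] structure_eq[OF t, of s] \<gamma>_jets[of 0 s] \<gamma>_jets[of 1 s]
      \<gamma>_jets[of 3 s]
    by (simp add: numeral_3_eq_3)
  then have k1: "k1 (s + L) t = k1 s t" and "Dx k1 (s + L) t + k2 (s + L) t = Dx k1 s t + k2 s t" for s
    using coeffs_unique_if_det_nonzero unimodular[OF t] by (metis zero_neq_one)+
  moreover have "Dx k1 (s + L) t = Dx k1 s t" for s
    using Dx_periodic[where f=k1 and L=L and t=t] smooth(2) t k1 by blast
  ultimately show "k1 (x + L) t = k1 x t" "k2 (x + L) t = k2 x t"
    by auto
qed

lemma flux_periodic:
  assumes "\<And>x t. t \<in> T \<Longrightarrow> \<gamma> (x + L) t = \<gamma> x t" "t \<in> T"
  shows "flux (x + L) t = flux x t"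
proof -
  have "(Dx ^^ n) k1 (s + L) t = (Dx ^^ n) k1 s t" "(Dx ^^ n) k2 (s + L) t = (Dx ^^ n) k2 s t" for n s
    using Dx_iterate_periodic[where L=L and t=t] smooth(2,3) assms(2) curvatures_periodic[OF assms]
    by blast+
  from this[of 0] this[of 1] this[of 2] this[of 3] this[of 4] show ?thesis
    by (simp add: flux_def eval_nat_numeral)
qed

lemma integral_k2_conserved:
  assumes "\<And>x t. t \<in> T \<Longrightarrow> \<gamma> (x + L) t = \<gamma> x t" "0 \<le> L" "t1 \<in> T" "t2 \<in> T"
  shows "integral {0..L} (\<lambda>x. k2 x t1) = integral {0..L} (\<lambda>x. k2 x t2)"
  using flux_periodic[OF assms(1), of _ 0] assms(2-4)
  by (intro integral_constant_if_Dt_eq_derivative[OF convex_T smooth(3), where G=flux])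
    (simp_all add: has_real_derivative_flux has_real_derivative_iff_has_vector_derivative[symmetric])

end

theorem mainTheorem5:
  fixes \<gamma> :: "real \<Rightarrow> real \<Rightarrow> real ^ 3"
    and k1 k2 :: "real \<Rightarrow> real \<Rightarrow> real"
    and T :: "real set"
  assumes T: "open T" "is_interval T"
    and smooth: "smooth2 T \<gamma>" "smooth2 T k1" "smooth2 T k2"
    and arclength: "\<And>x t. t \<in> T \<Longrightarrow>
        det (vector [\<gamma> x t, Dx \<gamma> x t, Dx (Dx \<gamma>) x t] :: real ^ 3 ^ 3) = 1"
    and invariants: "\<And>x t. t \<in> T \<Longrightarrow>
        Dx (Dx (Dx \<gamma>)) x t
          = Dx (\<lambda>x t. k1 x t *\<^sub>R \<gamma> x t) x t + k2 x t *\<^sub>R \<gamma> x t"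
    and flow: "\<And>x t. t \<in> T \<Longrightarrow>
        Dt \<gamma> x t = k1 x t *\<^sub>R Dx (Dx \<gamma>) x t + k2 x t *\<^sub>R Dx \<gamma> x t
          - (Dx k2 x t + (1/3) * (Dx (Dx k1) x t + 2 * (k1 x t)^2)) *\<^sub>R \<gamma> x t"
  shows "(\<forall>x t. t \<in> T \<longrightarrow>
            Dt k2 x t = Dx (\<lambda>x t.
                (2/3) * Dx (Dx (Dx (Dx k1))) x t + Dx (Dx (Dx k2)) x t
              - 2 * k1 x t * Dx (Dx k1) x t - (Dx k1 x t)^2
              - 2 * k1 x t * Dx k2 x t + (4/9) * (k1 x t)^3 + 2 * (k2 x t)^2) x t)
       \<and> (\<forall>L. L > 0 \<longrightarrow> (\<forall>x t. t \<in> T \<longrightarrow> \<gamma> (x + L) t = \<gamma> x t) \<longrightarrow>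
            (\<forall>t1\<in>T. \<forall>t2\<in>T. integral {0..L} (\<lambda>x. k2 x t1) = integral {0..L} (\<lambda>x. k2 x t2)))"
proof -
  have structure_eq: "Dx (Dx (Dx \<gamma>)) x t = (Dx k1 x t + k2 x t) *\<^sub>R \<gamma> x t + k1 x t *\<^sub>R Dx \<gamma> x t"
    if "t \<in> T" for x t
    using invariants[OF that, of x] Dx_scaleR[OF smooth(2,1) that, of x] by (simp add: algebra_simps)
  interpret centroaffine_flow \<gamma> k1 k2 T
    using T smooth arclength structure_eq flow by unfold_locales (simp_all add: is_interval_convex)
  show ?thesis
    unfolding flux_def[abs_def, symmetric]
    using Dt_k2_eq_Dx_flux integral_k2_conserved less_imp_le by blast
qed

end
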